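(* Suppose $D_{KL}(\hat{\mathsf p}_k\,\|\,\hat\pi_k)\le\epsilon_k<\infty$ for each $k$. Then the linearized game with payoff $\tilde L(\lambda,g)=\sum_{k=1}^p\lambda_kD_{KL}(\hat{\mathsf p}_k\,\|\,\pi_g)$ on $\Delta\times\mathcal G_1$ admits a saddle point $(\lambda^*,g^* )$, i.e. $\tilde L(\lambda,g^* )\le\tilde L(\lambda^*,g^* )\le\tilde L(\lambda^*,g)$ for all $\lambda\in\Delta$, $g\in\mathcal G_1$. Moreover, for any such saddle point and every $\lambda\in\Delta$, $$D_{KL}(\hat{\mathsf p}_\lambda\,\|\,\pi_{g^*})\le\log\Big(\sum_{k=1}^pe^{\epsilon_k}\Big)-H^{\lambda^*}_\sigma(K|X)-D^{\lambda}_{JSD}(\hat{\mathsf p}_1,\dots,\hat{\mathsf p}_p),$$ where $\sigma_k=e^{\epsilon_k}/\sum_{j=1}^pe^{\epsilon_j}$, $\pi_\sigma=\sum_{k=1}^p\sigma_k\hat\pi_k$, and $$H^{\lambda^*}_\sigma(K|X)=\sum_{k=1}^p\lambda^*_k\,\mathbb E_{x\sim\hat{\mathsf p}_k}\Big[-\log\frac{\sigma_k\hat\pi_k(x)}{\pi_\sigma(x)}\Big].$$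
   Context: Fix an integer $p\ge 1$, $[1,p]=\{1,\dots,p\}$, $\Delta=\{\lambda\in\mathbb R^p:\lambda_k\ge 0,\ \sum_k\lambda_k=1\}$. Let $\hat{\mathsf p}_1,\dots,\hat{\mathsf p}_p$ be probability distributions with finite supports, $\mathcal X_0=\bigcup_k\mathrm{supp}(\hat{\mathsf p}_k)$, and $\hat\pi_1,\dots,\hat\pi_p$ probability distributions on $\mathcal X_0$. A gate is $g:\mathcal X_0\times[1,p]\to[0,1]$ with $\sum_kg(x,k)=1$ for each $x$; $\pi_g(x)=\sum_kg(x,k)\hat\pi_k(x)$, $Z_g=\sum_{x\in\mathcal X_0}\pi_g(x)$, $\mathcal G_1=\{g:Z_g=1\}$. For $\lambda\in\Delta$, $\hat{\mathsf p}_\lambda=\sum_k\lambda_k\hat{\mathsf p}_k$. $D_{KL}(P\|Q)=\sum_xP(x)\log\frac{P(x)}{Q(x)}\in[0,\infty]$ with conventions $0\log\frac0q=0$, $a\log\frac a0=+\infty$ for $a>0$. The Jensen–Shannon divergence is $D^\lambda_{JSD}(\hat{\mathsf p}_1,\dots,\hat{\mathsf p}_p)=\sum_{k=1}^p\lambda_kD_{KL}(\hat{\mathsf p}_k\,\|\,\hat{\mathsf p}_\lambda)$. *)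

theory Defs
  imports "HOL-Probability.Probability"
begin

text \<open>Index set [1,p] is {1..p}. Distributions with finite support are pmfs
  with finite set_pmf. Divergences take values in ereal.\<close>

definition prob_simplex :: "nat \<Rightarrow> (nat \<Rightarrow> real) set" where
  "prob_simplex p = {l. (\<forall>k\<in>{1..p}. 0 \<le> l k) \<and> (\<Sum>k=1..p. l k) = 1}"

definition X0 :: "(nat \<Rightarrow> 'a pmf) \<Rightarrow> nat \<Rightarrow> 'a set" where
  "X0 P p = (\<Union>k\<in>{1..p}. set_pmf (P k))"

text \<open>Kullback-Leibler divergence of (finitely supported) nonnegative functions,
  with conventions 0 log(0/q) = 0 and a log(a/0) = +infinity for a > 0.\<close>
definition KL :: "('a \<Rightarrow> real) \<Rightarrow> ('a \<Rightarrow> real) \<Rightarrow> ereal" where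
  "KL P Q = (if \<exists>x. P x \<noteq> 0 \<and> Q x = 0 then PInfty
             else ereal (\<Sum>x\<in>{x. P x \<noteq> 0}. P x * ln (P x / Q x)))"

definition is_gate :: "'a set \<Rightarrow> nat \<Rightarrow> ('a \<Rightarrow> nat \<Rightarrow> real) \<Rightarrow> bool" where
  "is_gate X p g \<longleftrightarrow> (\<forall>x\<in>X. (\<forall>k\<in>{1..p}. 0 \<le> g x k \<and> g x k \<le> 1) \<and> (\<Sum>k=1..p. g x k) = 1)"

definition pi_g :: "(nat \<Rightarrow> 'a pmf) \<Rightarrow> (nat \<Rightarrow> 'a pmf) \<Rightarrow> nat \<Rightarrow> ('a \<Rightarrow> nat \<Rightarrow> real) \<Rightarrow> 'a \<Rightarrow> real" where
  "pi_g P Pih p g x = (if x \<in> X0 P p then (\<Sum>k=1..p. g x k * pmf (Pih k) x) else 0)"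

definition Z_g :: "(nat \<Rightarrow> 'a pmf) \<Rightarrow> (nat \<Rightarrow> 'a pmf) \<Rightarrow> nat \<Rightarrow> ('a \<Rightarrow> nat \<Rightarrow> real) \<Rightarrow> real" where
  "Z_g P Pih p g = (\<Sum>x\<in>X0 P p. pi_g P Pih p g x)"

definition G1 :: "(nat \<Rightarrow> 'a pmf) \<Rightarrow> (nat \<Rightarrow> 'a pmf) \<Rightarrow> nat \<Rightarrow> ('a \<Rightarrow> nat \<Rightarrow> real) set" where
  "G1 P Pih p = {g. is_gate (X0 P p) p g \<and> Z_g P Pih p g = 1}"

definition mixture :: "(nat \<Rightarrow> 'a pmf) \<Rightarrow> nat \<Rightarrow> (nat \<Rightarrow> real) \<Rightarrow> 'a \<Rightarrow> real" where
  "mixture P p l x = (\<Sum>k=1..p. l k * pmf (P k) x)"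

definition Ltilde :: "(nat \<Rightarrow> 'a pmf) \<Rightarrow> (nat \<Rightarrow> 'a pmf) \<Rightarrow> nat \<Rightarrow> (nat \<Rightarrow> real) \<Rightarrow> ('a \<Rightarrow> nat \<Rightarrow> real) \<Rightarrow> ereal" where
  "Ltilde P Pih p l g = (\<Sum>k=1..p. ereal (l k) * KL (pmf (P k)) (pi_g P Pih p g))"

definition is_saddle :: "(nat \<Rightarrow> 'a pmf) \<Rightarrow> (nat \<Rightarrow> 'a pmf) \<Rightarrow> nat \<Rightarrow> (nat \<Rightarrow> real) \<Rightarrow> ('a \<Rightarrow> nat \<Rightarrow> real) \<Rightarrow> bool" where
  "is_saddle P Pih p ls gs \<longleftrightarrow> ls \<in> prob_simplex p \<and> gs \<in> G1 P Pih p \<and>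
     (\<forall>l\<in>prob_simplex p. \<forall>g\<in>G1 P Pih p.
        Ltilde P Pih p l gs \<le> Ltilde P Pih p ls gs \<and> Ltilde P Pih p ls gs \<le> Ltilde P Pih p ls g)"

definition JSD :: "(nat \<Rightarrow> 'a pmf) \<Rightarrow> nat \<Rightarrow> (nat \<Rightarrow> real) \<Rightarrow> ereal" where
  "JSD P p l = (\<Sum>k=1..p. ereal (l k) * KL (pmf (P k)) (mixture P p l))"

definition sigma :: "(nat \<Rightarrow> real) \<Rightarrow> nat \<Rightarrow> nat \<Rightarrow> real" where
  "sigma eps p k = exp (eps k) / (\<Sum>j=1..p. exp (eps j))"

definition pi_sigma :: "(nat \<Rightarrow> 'a pmf) \<Rightarrow> (nat \<Rightarrow> real) \<Rightarrow> nat \<Rightarrow> 'a \<Rightarrow> real" where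
  "pi_sigma Pih eps p x = (\<Sum>k=1..p. sigma eps p k * pmf (Pih k) x)"

definition H_cond :: "(nat \<Rightarrow> 'a pmf) \<Rightarrow> (nat \<Rightarrow> 'a pmf) \<Rightarrow> (nat \<Rightarrow> real) \<Rightarrow> nat \<Rightarrow> (nat \<Rightarrow> real) \<Rightarrow> real" where
  "H_cond P Pih eps p l = (\<Sum>k=1..p. l k *
     (\<Sum>x\<in>set_pmf (P k). pmf (P k) x *
        (- ln (sigma eps p k * pmf (Pih k) x / pi_sigma Pih eps p x))))"

end

(*
  The game is convex in the gate: Ltilde(\<lambda>, g) is linear in \<lambda>, and every KL(P_k || \<pi>_g)
  is convex in g because \<pi>_g is linear in g and -ln is convex. On the compact convex set of
  gates whose mixture stays above a floor \<delta> > 0, a minimax theorem for finitely many continuous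
  convex functions (proved by minimising the squared excess over a level u and letting u increase
  to the minimax value) yields weights \<lambda>\<^sup>\<star> and a gate g\<^sup>\<star> with
  KL(P_k || \<pi>_g\<^sup>\<star>) \<le> \<Sum>_j \<lambda>\<^sup>\<star>_j KL(P_j || \<pi>_g) for all k and all admissible g.
  Comparing g\<^sup>\<star> with the constant gate \<sigma> bounds its divergences, which for a suitable \<delta>
  keeps \<pi>_g\<^sup>\<star> above 2\<delta>; so midpoints of g\<^sup>\<star> with arbitrary gates stay admissible, and
  convexity makes (\<lambda>\<^sup>\<star>, g\<^sup>\<star>) a saddle point on all of G_1.

  For the bound, Ltilde(\<lambda>, g\<^sup>\<star>) \<le> Ltilde(\<lambda>\<^sup>\<star>, g\<^sup>\<star>) \<le> Ltilde(\<lambda>\<^sup>\<star>, \<sigma>), and because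
  \<epsilon>_k - ln \<sigma>_k = ln \<Sum>_j exp \<epsilon>_j for every k, the last value is at most
  ln \<Sum>_j exp \<epsilon>_j - H(K|X). The compensation identity
  Ltilde(\<lambda>, g\<^sup>\<star>) = KL(P_\<lambda> || \<pi>_g\<^sup>\<star>) + JSD(\<lambda>) then gives the claim.
*)
theory Submission
  imports Defs
begin

section \<open>Minimax for finitely many convex functions\<close>

lemma compact_fun_box:
  fixes S :: "'i \<Rightarrow> 'b::topological_space set"
  assumes "\<And>i. compact (S i)"
  shows "compact {f. \<forall>i. f i \<in> S i}"
proof -
  have "{f. \<forall>i. f i \<in> S i} = Pi\<^sub>E UNIV S"
    by (auto simp: PiE_UNIV_domain)
  then show ?thesis
    using compactin_PiE[of "\<lambda>i. euclidean" UNIV S] assms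
    by (simp add: euclidean_product_topology)
qed

lemma continuous_on_Max_image:
  fixes f :: "'i \<Rightarrow> 'c::topological_space \<Rightarrow> real"
  assumes "finite K" "K \<noteq> {}" "\<And>k. k \<in> K \<Longrightarrow> continuous_on C (f k)"
  shows "continuous_on C (\<lambda>c. Max ((\<lambda>k. f k c) ` K))"
  using assms
proof (induction K rule: finite_ne_induct)
  case (insert k K)
  have "(\<lambda>c. Max ((\<lambda>k. f k c) ` insert k K)) = (\<lambda>c. max (f k c) (Max ((\<lambda>k. f k c) ` K)))"
    using insert by auto
  then show ?case using insert by (auto intro: continuous_on_max)
qed simp

lemma nonneg_if_quadratic_nonneg_near_0:
  fixes A B :: real
  assumes "\<And>s. 0 < s \<Longrightarrow> s \<le> 1 \<Longrightarrow> 0 \<le> 2 * s * A + s\<^sup>2 * B"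
  shows "0 \<le> A"
proof (rule ccontr)
  assume "\<not> 0 \<le> A"
  then have A: "A < 0" by simp
  have "0 \<le> 2 * A + B" using assms[of 1] by simp
  with A have B: "B > 0" by simp
  define s where "s = min 1 (- A / B)"
  have s: "0 < s" "s \<le> 1" "s * B \<le> - A"
    using A B by (auto simp: s_def min_def field_simps)
  have "0 \<le> s * (2 * A + s * B)"
    using assms[OF s(1,2)] by (simp add: power2_eq_square algebra_simps)
  then have "0 \<le> 2 * A + s * B" using s(1) by (simp add: zero_le_mult_iff)
  with s(3) A show False by simp
qed

lemma pos_part_square_le:
  fixes z a u e :: real
  assumes "z \<le> a + e"
  shows "(max 0 (z - u))\<^sup>2 \<le> (max 0 (a - u) + e)\<^sup>2"
  using assms by (smt (verit) power_mono zero_le_power2 zero_power2)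

locale convex_family =
  fixes C :: "'c::topological_space set" and mix :: "real \<Rightarrow> 'c \<Rightarrow> 'c \<Rightarrow> 'c"
    and K :: "'i set" and f :: "'i \<Rightarrow> 'c \<Rightarrow> real"
  assumes compact_C: "compact C" and finite_K: "finite K"
    and continuous_f: "\<And>k. k \<in> K \<Longrightarrow> continuous_on C (f k)"
    and mix_in: "\<And>a b t. a \<in> C \<Longrightarrow> b \<in> C \<Longrightarrow> 0 \<le> t \<Longrightarrow> t \<le> 1 \<Longrightarrow> mix t a b \<in> C"
    and convex_f: "\<And>k a b t. k \<in> K \<Longrightarrow> a \<in> C \<Longrightarrow> b \<in> C \<Longrightarrow> 0 \<le> t \<Longrightarrow> t \<le> 1 \<Longrightarrow>
                     f k (mix t a b) \<le> (1 - t) * f k a + t * f k b"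
begin

definition excess :: "real \<Rightarrow> 'c \<Rightarrow> real" where
  "excess u c = (\<Sum>k\<in>K. (max 0 (f k c - u))\<^sup>2)"

lemma excess_minimizer_first_order:
  assumes c0: "c0 \<in> C" "\<And>c. c \<in> C \<Longrightarrow> excess u c0 \<le> excess u c" and c: "c \<in> C"
  shows "0 \<le> (\<Sum>k\<in>K. max 0 (f k c0 - u) * (f k c - f k c0))"
proof -
  define l where "l k = max 0 (f k c0 - u)" for k
  define d where "d k = f k c - f k c0" for k
  have "0 \<le> 2 * s * (\<Sum>k\<in>K. l k * d k) + s\<^sup>2 * (\<Sum>k\<in>K. (d k)\<^sup>2)" if s: "0 < s" "s \<le> 1" for s
  proof -
    have "excess u c0 \<le> excess u (mix s c0 c)"
      using c0 c s by (intro c0(2) mix_in) auto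
    also have "\<dots> \<le> (\<Sum>k\<in>K. (l k + s * d k)\<^sup>2)"
      unfolding excess_def l_def
    proof (rule sum_mono)
      fix k assume "k \<in> K"
      then have "f k (mix s c0 c) \<le> f k c0 + s * d k"
        using convex_f[OF _ c0(1) c, of k s] s by (simp add: d_def algebra_simps)
      then show "(max 0 (f k (mix s c0 c) - u))\<^sup>2 \<le> (max 0 (f k c0 - u) + s * d k)\<^sup>2"
        by (rule pos_part_square_le)
    qed
    also have "\<dots> = (\<Sum>k\<in>K. (l k)\<^sup>2 + 2 * s * (l k * d k) + s\<^sup>2 * (d k)\<^sup>2)"
      by (rule sum.cong) (simp_all add: power2_eq_square algebra_simps)
    also have "\<dots> = excess u c0 + 2 * s * (\<Sum>k\<in>K. l k * d k) + s\<^sup>2 * (\<Sum>k\<in>K. (d k)\<^sup>2)"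
      by (simp add: excess_def l_def sum.distrib sum_distrib_left)
    finally show ?thesis by simp
  qed
  then have "0 \<le> (\<Sum>k\<in>K. l k * d k)"
    by (rule nonneg_if_quadratic_nonneg_near_0)
  then show ?thesis by (simp add: l_def d_def)
qed

definition weight_box :: "('i \<Rightarrow> real) set" where
  "weight_box = {\<mu>. \<forall>k. \<mu> k \<in> (if k \<in> K then {0..1} else {0})}"

definition level_weights :: "real \<Rightarrow> ('i \<Rightarrow> real) set" where
  "level_weights u = {\<mu>. sum \<mu> K = 1 \<and> (\<forall>c\<in>C. u \<le> (\<Sum>k\<in>K. \<mu> k * f k c))}"

lemma compact_weight_box: "compact weight_box"
  unfolding weight_box_def by (intro compact_fun_box) auto

lemma weight_box_nonneg:
  assumes "\<mu> \<in> weight_box" "k \<in> K"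
  shows "0 \<le> \<mu> k"
proof -
  have "\<mu> k \<in> (if k \<in> K then {0..1} else {0})"
    using assms(1) by (simp add: weight_box_def)
  then show ?thesis using assms(2) by simp
qed

lemma closed_level_weights: "closed (level_weights u)"
proof -
  have "level_weights u = {\<mu>. sum \<mu> K = 1} \<inter> (\<Inter>c\<in>C. {\<mu>. u \<le> (\<Sum>k\<in>K. \<mu> k * f k c)})"
    unfolding level_weights_def by auto
  also have "closed \<dots>"
    by (intro closed_Int closed_INT ballI closed_Collect_eq closed_Collect_le continuous_intros
          continuous_on_product_coordinates)
  finally show ?thesis .
qed

lemma level_weights_antimono: "u \<le> v \<Longrightarrow> level_weights v \<subseteq> level_weights u"
  unfolding level_weights_def by force

text \<open>The weights are the normalised excesses \<open>max 0 (f k c0 - u)\<close> at a minimiser \<open>c0\<close> of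
  \<open>excess u\<close>; by the first-order condition they lift all of \<open>C\<close> above the level \<open>u\<close>.\<close>
lemma level_weights_nonempty:
  assumes "C \<noteq> {}" and above: "\<And>c. c \<in> C \<Longrightarrow> \<exists>k\<in>K. u < f k c"
  shows "weight_box \<inter> level_weights u \<noteq> {}"
proof -
  have "continuous_on C (excess u)"
    unfolding excess_def using continuous_f by (intro continuous_intros) auto
  then obtain c0 where c0: "c0 \<in> C" "\<And>c. c \<in> C \<Longrightarrow> excess u c0 \<le> excess u c"
    using continuous_attains_inf[OF compact_C \<open>C \<noteq> {}\<close>] by blast
  define l where "l k = max 0 (f k c0 - u)" for k
  define L where "L = sum l K"
  have l_nonneg: "0 \<le> l k" for k by (simp add: l_def)
  obtain k0 where "k0 \<in> K" "u < f k0 c0" using above c0(1) by blast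
  then have L_pos: "0 < L"
    unfolding L_def using finite_K l_nonneg by (intro sum_pos2[of K k0]) (auto simp: l_def)
  have "u * L \<le> (\<Sum>k\<in>K. l k * f k c0)"
    unfolding L_def sum_distrib_left
    by (intro sum_mono) (auto simp: l_def max_def mult.commute mult_right_mono)
  moreover have "0 \<le> (\<Sum>k\<in>K. l k * f k c) - (\<Sum>k\<in>K. l k * f k c0)" if "c \<in> C" for c
    using excess_minimizer_first_order[OF c0 that]
    by (simp add: l_def sum_subtractf[symmetric] right_diff_distrib)
  ultimately have "u * L \<le> (\<Sum>k\<in>K. l k * f k c)" if "c \<in> C" for c
    using that by fastforce
  then have level: "u \<le> (\<Sum>k\<in>K. l k / L * f k c)" if "c \<in> C" for c
    using that L_pos by (simp add: pos_le_divide_eq sum_divide_distrib[symmetric])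
  define \<mu> where "\<mu> k = (if k \<in> K then l k / L else 0)" for k
  have sum_\<mu>: "(\<Sum>k\<in>K. \<mu> k * g k) = (\<Sum>k\<in>K. l k / L * g k)" for g
    by (simp add: \<mu>_def)
  have "l k \<le> L" if "k \<in> K" for k
    unfolding L_def using finite_K that l_nonneg by (intro member_le_sum) auto
  then have "\<mu> \<in> weight_box"
    using L_pos l_nonneg by (auto simp: weight_box_def \<mu>_def)
  moreover have "\<mu> \<in> level_weights u"
    using sum_\<mu>[of "\<lambda>_. 1"] L_pos level
    by (auto simp: level_weights_def sum_\<mu> sum_divide_distrib[symmetric] L_def)
  ultimately show ?thesis by blast
qed

lemma level_weights_nonempty_at_limit:
  assumes below: "\<And>u. u < v \<Longrightarrow> weight_box \<inter> level_weights u \<noteq> {}"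
  shows "weight_box \<inter> level_weights v \<noteq> {}"
proof -
  define u where "u n = v - 1 / (real n + 1)" for n :: nat
  have u_below: "u n < v" for n
    by (simp add: u_def)
  have u_mono: "u m \<le> u n" if "m \<le> n" for m n
    unfolding u_def using that by (simp add: frac_le)
  have "weight_box \<inter> (\<Inter>n\<in>UNIV. level_weights (u n)) \<noteq> {}"
  proof (rule compact_imp_fip_image[OF compact_weight_box])
    show "closed (level_weights (u n))" for n
      by (rule closed_level_weights)
  next
    fix I :: "nat set" assume "finite I"
    then have "level_weights (u (Max (insert 0 I))) \<subseteq> (\<Inter>n\<in>I. level_weights (u n))"
      by (intro INT_greatest level_weights_antimono u_mono) simp
    then show "weight_box \<inter> (\<Inter>n\<in>I. level_weights (u n)) \<noteq> {}"
      using below[OF u_below[of "Max (insert 0 I)"]] by blast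
  qed
  then obtain \<mu> where \<mu>: "\<mu> \<in> weight_box" "\<And>n. \<mu> \<in> level_weights (u n)"
    by auto
  have "v \<le> (\<Sum>k\<in>K. \<mu> k * f k c)" if "c \<in> C" for c
  proof (rule ccontr)
    assume "\<not> ?thesis"
    then have "0 < v - (\<Sum>k\<in>K. \<mu> k * f k c)" by simp
    then obtain n where "inverse (real (Suc n)) < v - (\<Sum>k\<in>K. \<mu> k * f k c)"
      using reals_Archimedean by blast
    moreover have "u n \<le> (\<Sum>k\<in>K. \<mu> k * f k c)"
      using \<mu>(2)[of n] that by (simp add: level_weights_def)
    ultimately show False by (simp add: u_def inverse_eq_divide add.commute)
  qed
  then have "\<mu> \<in> level_weights v"
    using \<mu>(2)[of 0] by (simp add: level_weights_def)
  with \<mu>(1) show ?thesis by blast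
qed

theorem minimax:
  assumes "C \<noteq> {}" "K \<noteq> {}"
  obtains \<mu> c where "\<forall>k\<in>K. 0 \<le> \<mu> k" "sum \<mu> K = 1" "c \<in> C"
    "\<And>k c'. k \<in> K \<Longrightarrow> c' \<in> C \<Longrightarrow> f k c \<le> (\<Sum>j\<in>K. \<mu> j * f j c')"
proof -
  define F where "F c = Max ((\<lambda>k. f k c) ` K)" for c
  have "continuous_on C F"
    unfolding F_def using finite_K assms(2) continuous_f by (rule continuous_on_Max_image)
  then obtain c where c: "c \<in> C" "\<And>c'. c' \<in> C \<Longrightarrow> F c \<le> F c'"
    using continuous_attains_inf[OF compact_C assms(1)] by blast
  have "F c' \<in> (\<lambda>k. f k c') ` K" for c'
    unfolding F_def using finite_K assms(2) by (intro Max_in) auto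
  then have F_attained: "\<exists>k\<in>K. F c' = f k c'" for c'
    by (metis imageE)
  have "weight_box \<inter> level_weights u \<noteq> {}" if "u < F c" for u
  proof (rule level_weights_nonempty[OF assms(1)])
    fix c' assume "c' \<in> C"
    then have "u < F c'" using c that by (meson less_le_trans)
    then show "\<exists>k\<in>K. u < f k c'" using F_attained[of c'] by auto
  qed
  then obtain \<mu> where \<mu>: "\<mu> \<in> weight_box" "\<mu> \<in> level_weights (F c)"
    using level_weights_nonempty_at_limit by blast
  show ?thesis
  proof (rule that[of \<mu> c])
    show "\<forall>k\<in>K. 0 \<le> \<mu> k" using \<mu>(1) weight_box_nonneg by blast
    show "sum \<mu> K = 1" using \<mu>(2) by (simp add: level_weights_def)
    show "c \<in> C" by (rule c(1))
    fix k c' assume "k \<in> K" "c' \<in> C"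
    then have "f k c \<le> F c" unfolding F_def using finite_K by (intro Max_ge) auto
    also have "\<dots> \<le> (\<Sum>j\<in>K. \<mu> j * f j c')" using \<mu> \<open>c' \<in> C\<close> by (auto simp: level_weights_def)
    finally show "f k c \<le> (\<Sum>j\<in>K. \<mu> j * f j c')" .
  qed
qed

end

section \<open>Kullback-Leibler divergence of finitely supported functions\<close>

definition KL_sum :: "'a set \<Rightarrow> ('a \<Rightarrow> real) \<Rightarrow> ('a \<Rightarrow> real) \<Rightarrow> real" where
  "KL_sum A P Q = (\<Sum>x\<in>A. P x * (ln (P x) - ln (Q x)))"

lemma KL_eq_KL_sum:
  assumes "finite A" "\<And>x. P x \<noteq> 0 \<Longrightarrow> x \<in> A" "\<And>x. P x \<noteq> 0 \<Longrightarrow> 0 < P x \<and> 0 < Q x"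
  shows "KL P Q = ereal (KL_sum A P Q)"
proof -
  have "ln (P x / Q x) = ln (P x) - ln (Q x)" if "P x \<noteq> 0" for x
    using assms(3)[OF that] by (simp add: ln_div)
  then have "(\<Sum>x\<in>{x. P x \<noteq> 0}. P x * ln (P x / Q x)) = (\<Sum>x\<in>{x. P x \<noteq> 0}. P x * (ln (P x) - ln (Q x)))"
    by simp
  also have "\<dots> = KL_sum A P Q"
    unfolding KL_sum_def using assms(1,2) by (intro sum.mono_neutral_left) auto
  finally show ?thesis
    using assms(3) unfolding KL_def by (metis less_irrefl)
qed

lemma KL_eq_PInfty: "P x \<noteq> 0 \<Longrightarrow> Q x = 0 \<Longrightarrow> KL P Q = \<infinity>"
  unfolding KL_def by auto

lemma KL_neq_MInfty: "KL P Q \<noteq> - \<infinity>"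
  unfolding KL_def by auto

text \<open>The compensation identity. It is pure algebra in the logarithms, so it needs no positivity
  hypotheses.\<close>
lemma KL_sum_average:
  "(\<Sum>i\<in>I. l i * KL_sum A (P i) Q) =
     KL_sum A (\<lambda>x. \<Sum>i\<in>I. l i * P i x) Q + (\<Sum>i\<in>I. l i * KL_sum A (P i) (\<lambda>x. \<Sum>i\<in>I. l i * P i x))"
proof -
  let ?M = "\<lambda>x. \<Sum>i\<in>I. l i * P i x"
  have "(\<Sum>i\<in>I. l i * KL_sum A (P i) Q) =
      (\<Sum>i\<in>I. \<Sum>x\<in>A. l i * P i x * (ln (?M x) - ln (Q x))) + (\<Sum>i\<in>I. l i * KL_sum A (P i) ?M)"
    by (simp add: KL_sum_def sum_distrib_left sum.distrib[symmetric] algebra_simps)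
  also have "(\<Sum>i\<in>I. \<Sum>x\<in>A. l i * P i x * (ln (?M x) - ln (Q x))) = KL_sum A ?M Q"
    by (subst sum.swap) (simp add: KL_sum_def sum_distrib_right)
  finally show ?thesis .
qed

lemma sum_ereal_weighted:
  assumes "\<And>k. k \<in> K \<Longrightarrow> 0 \<le> l k" "\<And>k. k \<in> K \<Longrightarrow> 0 < l k \<Longrightarrow> E k = ereal (r k)"
  shows "(\<Sum>k\<in>K. ereal (l k) * E k) = ereal (\<Sum>k\<in>K. l k * r k)"
proof -
  have "ereal (l k) * E k = ereal (l k * r k)" if "k \<in> K" for k
  proof (cases "l k = 0")
    case False
    with assms(1)[OF that] have "0 < l k" by simp
    then show ?thesis using assms(2)[OF that] by simp
  qed (simp add: zero_ereal_def[symmetric])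
  then have "(\<Sum>k\<in>K. ereal (l k) * E k) = (\<Sum>k\<in>K. ereal (l k * r k))"
    by (rule sum.cong[OF refl])
  then show ?thesis by simp
qed

lemma sum_ereal_weighted_PInfty:
  assumes "finite K" "\<And>k. k \<in> K \<Longrightarrow> 0 \<le> l k" "\<And>k. k \<in> K \<Longrightarrow> E k \<noteq> - \<infinity>"
    and "k0 \<in> K" "0 < l k0" "E k0 = \<infinity>"
  shows "(\<Sum>k\<in>K. ereal (l k) * E k) = \<infinity>"
  using assms by (subst sum_Pinfty) auto

section \<open>The divergence bound at a saddle point\<close>

locale gated_experts =
  fixes p :: nat and P Pih :: "nat \<Rightarrow> 'a pmf" and eps :: "nat \<Rightarrow> real"
  assumes p_pos: "1 \<le> p"
    and finite_support: "\<forall>k\<in>{1..p}. finite (set_pmf (P k))"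
    and support_Pih: "\<forall>k\<in>{1..p}. set_pmf (Pih k) \<subseteq> X0 P p"
    and KL_le_eps: "\<forall>k\<in>{1..p}. KL (pmf (P k)) (pmf (Pih k)) \<le> ereal (eps k)"
begin

abbreviation X :: "'a set" where "X \<equiv> X0 P p"

definition kl_gate :: "nat \<Rightarrow> ('a \<Rightarrow> nat \<Rightarrow> real) \<Rightarrow> real" where
  "kl_gate k g = KL_sum X (pmf (P k)) (pi_g P Pih p g)"

lemma finite_X: "finite X"
  unfolding X0_def using finite_support by auto

lemma pmf_nonzero_in_X: "k \<in> {1..p} \<Longrightarrow> pmf (P k) x \<noteq> 0 \<Longrightarrow> x \<in> X"
  unfolding X0_def by (auto simp: set_pmf_iff)

lemma X_covered: "x \<in> X \<Longrightarrow> \<exists>k\<in>{1..p}. 0 < pmf (P k) x"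
  unfolding X0_def by (auto simp: pmf_positive_iff)

lemma sum_pmf_P: "k \<in> {1..p} \<Longrightarrow> (\<Sum>x\<in>X. pmf (P k) x) = 1"
  using finite_X by (intro sum_pmf_eq_1) (auto simp: X0_def)

lemma sum_pmf_Pih: "k \<in> {1..p} \<Longrightarrow> (\<Sum>x\<in>X. pmf (Pih k) x) = 1"
  using finite_X support_Pih by (intro sum_pmf_eq_1) auto

lemma pmf_Pih_pos:
  assumes "k \<in> {1..p}" "pmf (P k) x \<noteq> 0"
  shows "0 < pmf (Pih k) x"
proof (rule ccontr)
  assume "\<not> 0 < pmf (Pih k) x"
  then have "pmf (Pih k) x = 0"
    using pmf_nonneg[of "Pih k" x] by linarith
  then have "KL (pmf (P k)) (pmf (Pih k)) = \<infinity>"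
    using assms(2) by (rule KL_eq_PInfty[rotated])
  with KL_le_eps assms(1) show False by force
qed

lemma KL_sum_Pih_le_eps:
  assumes "k \<in> {1..p}"
  shows "KL_sum X (pmf (P k)) (pmf (Pih k)) \<le> eps k"
proof -
  have "KL (pmf (P k)) (pmf (Pih k)) = ereal (KL_sum X (pmf (P k)) (pmf (Pih k)))"
    using finite_X pmf_nonzero_in_X[OF assms] pmf_Pih_pos[OF assms] by (intro KL_eq_KL_sum) auto
  with KL_le_eps assms show ?thesis by force
qed

lemma pi_g_nonneg: "is_gate X p g \<Longrightarrow> 0 \<le> pi_g P Pih p g x"
  unfolding is_gate_def pi_g_def by (auto intro!: sum_nonneg)

lemma KL_pi_g_eq_kl_gate:
  assumes "k \<in> {1..p}" "\<And>x. pmf (P k) x \<noteq> 0 \<Longrightarrow> 0 < pi_g P Pih p g x"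
  shows "KL (pmf (P k)) (pi_g P Pih p g) = ereal (kl_gate k g)"
  unfolding kl_gate_def using finite_X pmf_nonzero_in_X[OF assms(1)] assms(2)
  by (intro KL_eq_KL_sum) auto

lemma Ltilde_cases:
  assumes l: "l \<in> prob_simplex p" and g: "is_gate X p g"
  obtains "Ltilde P Pih p l g = \<infinity>"
  | "\<And>k x. k \<in> {1..p} \<Longrightarrow> 0 < l k \<Longrightarrow> pmf (P k) x \<noteq> 0 \<Longrightarrow> 0 < pi_g P Pih p g x"
    "Ltilde P Pih p l g = ereal (\<Sum>k=1..p. l k * kl_gate k g)"
proof (cases "\<exists>k\<in>{1..p}. \<exists>x. 0 < l k \<and> pmf (P k) x \<noteq> 0 \<and> pi_g P Pih p g x = 0")
  case True
  then obtain k x where "k \<in> {1..p}" "0 < l k" "pmf (P k) x \<noteq> 0" "pi_g P Pih p g x = 0"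
    by blast
  then have "Ltilde P Pih p l g = \<infinity>"
    unfolding Ltilde_def using l KL_neq_MInfty KL_eq_PInfty
    by (intro sum_ereal_weighted_PInfty[of _ _ _ k]) (auto simp: prob_simplex_def)
  then show ?thesis by (rule that(1))
next
  case False
  then have pos: "0 < pi_g P Pih p g x" if "k \<in> {1..p}" "0 < l k" "pmf (P k) x \<noteq> 0" for k x
    using that pi_g_nonneg[OF g, of x] by force
  then have "Ltilde P Pih p l g = ereal (\<Sum>k=1..p. l k * kl_gate k g)"
    unfolding Ltilde_def using l by (intro sum_ereal_weighted KL_pi_g_eq_kl_gate) (auto simp: prob_simplex_def)
  with pos show ?thesis by (rule that(2))
qed

abbreviation exp_sum :: real where "exp_sum \<equiv> \<Sum>k=1..p. exp (eps k)"

lemma exp_sum_pos: "0 < exp_sum"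
  using p_pos by (intro sum_pos) auto

lemma sigma_pos: "0 < sigma eps p k"
  using exp_sum_pos by (simp add: sigma_def)

lemma sum_sigma: "(\<Sum>k=1..p. sigma eps p k) = 1"
  using exp_sum_pos by (simp add: sigma_def sum_divide_distrib[symmetric])

lemma sigma_le_1:
  assumes "k \<in> {1..p}"
  shows "sigma eps p k \<le> 1"
proof -
  have "sigma eps p k \<le> (\<Sum>j=1..p. sigma eps p j)"
    using assms by (intro member_le_sum) (auto simp: less_imp_le[OF sigma_pos])
  then show ?thesis using sum_sigma by simp
qed

lemma ln_sigma: "ln (sigma eps p k) = eps k - ln exp_sum"
  using exp_sum_pos by (simp add: sigma_def ln_div)

definition sigma_gate :: "'a \<Rightarrow> nat \<Rightarrow> real" where
  "sigma_gate x k = (if x \<in> X \<and> k \<in> {1..p} then sigma eps p k else 0)"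

definition log_posterior :: "nat \<Rightarrow> 'a \<Rightarrow> real" where
  "log_posterior k x = ln (sigma eps p k * pmf (Pih k) x / pi_sigma Pih eps p x)"

lemma pi_g_sigma_gate: "x \<in> X \<Longrightarrow> pi_g P Pih p sigma_gate x = pi_sigma Pih eps p x"
  unfolding pi_g_def pi_sigma_def sigma_gate_def by simp

lemma sum_X_weighted_Pih: "(\<Sum>x\<in>X. \<Sum>j=1..p. c j * pmf (Pih j) x) = (\<Sum>j=1..p. c j)"
proof -
  have "(\<Sum>x\<in>X. \<Sum>j=1..p. c j * pmf (Pih j) x) = (\<Sum>j=1..p. c j * (\<Sum>x\<in>X. pmf (Pih j) x))"
    by (subst sum.swap) (simp add: sum_distrib_left)
  also have "\<dots> = (\<Sum>j=1..p. c j)"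
    by (intro sum.cong) (simp_all add: sum_pmf_Pih)
  finally show ?thesis .
qed

lemma sigma_gate_G1: "sigma_gate \<in> G1 P Pih p"
proof -
  have "is_gate X p sigma_gate"
    unfolding is_gate_def sigma_gate_def using sigma_pos sigma_le_1 sum_sigma by (auto intro: less_imp_le)
  moreover have "Z_g P Pih p sigma_gate = 1"
    unfolding Z_g_def using sum_X_weighted_Pih[of "sigma eps p"] sum_sigma
    by (simp add: pi_g_sigma_gate pi_sigma_def)
  ultimately show ?thesis by (simp add: G1_def)
qed

lemma sigma_mass_le_pi_sigma:
  assumes "k \<in> {1..p}" "pmf (P k) x \<noteq> 0"
  shows "0 < sigma eps p k * pmf (Pih k) x" "sigma eps p k * pmf (Pih k) x \<le> pi_sigma Pih eps p x"
proof -
  show "0 < sigma eps p k * pmf (Pih k) x"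
    using sigma_pos pmf_Pih_pos[OF assms] by simp
  show "sigma eps p k * pmf (Pih k) x \<le> pi_sigma Pih eps p x"
    unfolding pi_sigma_def using assms(1) by (intro member_le_sum) (auto simp: less_imp_le[OF sigma_pos])
qed

lemma kl_gate_sigma_gate_le:
  assumes k: "k \<in> {1..p}"
  shows "kl_gate k sigma_gate \<le> ln exp_sum + (\<Sum>x\<in>set_pmf (P k). pmf (P k) x * log_posterior k x)"
proof -
  have split: "pmf (P k) x * (ln (pmf (P k) x) - ln (pi_g P Pih p sigma_gate x)) =
      pmf (P k) x * (ln (pmf (P k) x) - ln (pmf (Pih k) x)) - pmf (P k) x * ln (sigma eps p k)
      + pmf (P k) x * log_posterior k x" if "x \<in> X" for x
  proof (cases "pmf (P k) x = 0")
    case False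
    have "0 < pmf (Pih k) x" "0 < pi_sigma Pih eps p x"
      using pmf_Pih_pos[OF k False] sigma_mass_le_pi_sigma[OF k False] by auto
    then have "log_posterior k x = ln (sigma eps p k) + ln (pmf (Pih k) x) - ln (pi_sigma Pih eps p x)"
      unfolding log_posterior_def using sigma_pos[of k] by (simp add: ln_div ln_mult)
    then show ?thesis using that by (simp only: pi_g_sigma_gate) (simp add: algebra_simps)
  qed simp
  have "kl_gate k sigma_gate = KL_sum X (pmf (P k)) (pmf (Pih k)) - (\<Sum>x\<in>X. pmf (P k) x) * ln (sigma eps p k)
      + (\<Sum>x\<in>X. pmf (P k) x * log_posterior k x)"
    unfolding kl_gate_def KL_sum_def
    by (simp add: sum.cong[OF refl split] sum.distrib sum_subtractf sum_distrib_right)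
  also have "(\<Sum>x\<in>X. pmf (P k) x * log_posterior k x) = (\<Sum>x\<in>set_pmf (P k). pmf (P k) x * log_posterior k x)"
    using finite_X k by (intro sum.mono_neutral_right) (auto simp: X0_def set_pmf_iff)
  finally show ?thesis
    using KL_sum_Pih_le_eps[OF k] by (simp add: sum_pmf_P[OF k] ln_sigma)
qed

lemma H_cond_eq: "H_cond P Pih eps p l = - (\<Sum>k=1..p. l k * (\<Sum>x\<in>set_pmf (P k). pmf (P k) x * log_posterior k x))"
  by (simp add: H_cond_def log_posterior_def sum_negf)

lemma Ltilde_sigma_gate_le:
  assumes l: "l \<in> prob_simplex p"
  shows "Ltilde P Pih p l sigma_gate \<le> ereal (ln exp_sum - H_cond P Pih eps p l)"
proof -
  have l0: "\<And>k. k \<in> {1..p} \<Longrightarrow> 0 \<le> l k" and l1: "(\<Sum>k=1..p. l k) = 1"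
    using l by (auto simp: prob_simplex_def)
  have pos: "0 < pi_g P Pih p sigma_gate x" if "k \<in> {1..p}" "pmf (P k) x \<noteq> 0" for k x
    using sigma_mass_le_pi_sigma[OF that] pmf_nonzero_in_X[OF that] by (simp add: pi_g_sigma_gate)
  have "Ltilde P Pih p l sigma_gate = ereal (\<Sum>k=1..p. l k * kl_gate k sigma_gate)"
    unfolding Ltilde_def using l0 pos by (intro sum_ereal_weighted KL_pi_g_eq_kl_gate) auto
  moreover have "(\<Sum>k=1..p. l k * kl_gate k sigma_gate)
      \<le> (\<Sum>k=1..p. l k * (ln exp_sum + (\<Sum>x\<in>set_pmf (P k). pmf (P k) x * log_posterior k x)))"
    using l0 kl_gate_sigma_gate_le by (intro sum_mono mult_left_mono) auto
  moreover have "\<dots> = ln exp_sum - H_cond P Pih eps p l"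
    using l1 by (simp add: H_cond_eq distrib_left sum.distrib sum_distrib_right[symmetric])
  ultimately show ?thesis by simp
qed

lemma mixture_eq: "mixture P p l = (\<lambda>x. \<Sum>k=1..p. l k * pmf (P k) x)"
  by (simp add: fun_eq_iff mixture_def)

lemma mixture_pos:
  assumes "l \<in> prob_simplex p" "k \<in> {1..p}" "0 < l k" "pmf (P k) x \<noteq> 0"
  shows "0 < mixture P p l x"
proof -
  have "0 < l k * pmf (P k) x" using assms(3,4) by simp
  also have "\<dots> \<le> mixture P p l x"
    unfolding mixture_def using assms(1,2) by (intro member_le_sum) (auto simp: prob_simplex_def)
  finally show ?thesis .
qed

lemma mixture_nonzero:
  assumes "l \<in> prob_simplex p" "mixture P p l x \<noteq> 0"
  obtains k where "k \<in> {1..p}" "0 < l k" "pmf (P k) x \<noteq> 0"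
proof -
  have "\<exists>k\<in>{1..p}. l k * pmf (P k) x \<noteq> 0"
    using assms(2) unfolding mixture_def by (meson sum.neutral)
  then show ?thesis using assms(1) that by (force simp: prob_simplex_def)
qed

lemma JSD_eq:
  assumes l: "l \<in> prob_simplex p"
  shows "JSD P p l = ereal (\<Sum>k=1..p. l k * KL_sum X (pmf (P k)) (mixture P p l))"
  unfolding JSD_def using l finite_X pmf_nonzero_in_X mixture_pos[OF l]
  by (intro sum_ereal_weighted KL_eq_KL_sum) (auto simp: prob_simplex_def)

lemma KL_mixture_eq:
  assumes l: "l \<in> prob_simplex p"
    and q: "\<And>k x. k \<in> {1..p} \<Longrightarrow> 0 < l k \<Longrightarrow> pmf (P k) x \<noteq> 0 \<Longrightarrow> 0 < q x"
  shows "KL (mixture P p l) q = ereal (KL_sum X (mixture P p l) q)"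
proof (rule KL_eq_KL_sum[OF finite_X])
  fix x assume "mixture P p l x \<noteq> 0"
  then obtain k where k: "k \<in> {1..p}" "0 < l k" "pmf (P k) x \<noteq> 0"
    using mixture_nonzero[OF l] by blast
  show "x \<in> X" using pmf_nonzero_in_X k by blast
  show "0 < mixture P p l x \<and> 0 < q x" using mixture_pos[OF l k] q[OF k] by simp
qed

theorem KL_mixture_le:
  assumes sad: "is_saddle P Pih p ls gs" and l: "l \<in> prob_simplex p"
  shows "KL (mixture P p l) (pi_g P Pih p gs) \<le> ereal (ln exp_sum - H_cond P Pih eps p ls) - JSD P p l"
proof -
  have ls: "ls \<in> prob_simplex p" and gs: "gs \<in> G1 P Pih p"
    using sad by (auto simp: is_saddle_def)
  have "Ltilde P Pih p l gs \<le> Ltilde P Pih p ls gs" using sad l gs by (auto simp: is_saddle_def)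
  also have "\<dots> \<le> Ltilde P Pih p ls sigma_gate" using sad sigma_gate_G1 by (auto simp: is_saddle_def)
  also have "\<dots> \<le> ereal (ln exp_sum - H_cond P Pih eps p ls)" by (rule Ltilde_sigma_gate_le[OF ls])
  finally have bound: "Ltilde P Pih p l gs \<le> ereal (ln exp_sum - H_cond P Pih eps p ls)" .
  have gate: "is_gate X p gs" using gs by (simp add: G1_def)
  obtain pos: "\<And>k x. k \<in> {1..p} \<Longrightarrow> 0 < l k \<Longrightarrow> pmf (P k) x \<noteq> 0 \<Longrightarrow> 0 < pi_g P Pih p gs x"
    and finite: "Ltilde P Pih p l gs = ereal (\<Sum>k=1..p. l k * kl_gate k gs)"
  proof (rule Ltilde_cases[OF l gate])
    assume "Ltilde P Pih p l gs = \<infinity>"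
    with bound show thesis by simp
  qed (rule that, assumption+)
  have "(\<Sum>k=1..p. l k * kl_gate k gs) = KL_sum X (mixture P p l) (pi_g P Pih p gs)
      + (\<Sum>k=1..p. l k * KL_sum X (pmf (P k)) (mixture P p l))"
    unfolding kl_gate_def mixture_eq by (rule KL_sum_average)
  then show ?thesis
    using bound finite KL_mixture_eq[OF l pos] JSD_eq[OF l] by simp
qed

end

section \<open>Existence of a saddle point\<close>

definition mix_gate ::
    "real \<Rightarrow> ('a \<Rightarrow> nat \<Rightarrow> real) \<Rightarrow> ('a \<Rightarrow> nat \<Rightarrow> real) \<Rightarrow> 'a \<Rightarrow> nat \<Rightarrow> real" where
  "mix_gate t a b = (\<lambda>x k. (1 - t) * a x k + t * b x k)"

lemma pi_g_mix_gate:
  "pi_g P Pih p (mix_gate t a b) x = (1 - t) * pi_g P Pih p a x + t * pi_g P Pih p b x"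
proof -
  have "(\<Sum>k=1..p. ((1 - t) * a x k + t * b x k) * pmf (Pih k) x) =
      (1 - t) * (\<Sum>k=1..p. a x k * pmf (Pih k) x) + t * (\<Sum>k=1..p. b x k * pmf (Pih k) x)"
    by (simp add: sum.distrib sum_distrib_left distrib_right mult.assoc)
  then show ?thesis by (simp add: pi_g_def mix_gate_def)
qed

lemma continuous_on_eval2: "continuous_on S (\<lambda>g::'a \<Rightarrow> 'b \<Rightarrow> real. g x k)"
proof -
  have "continuous_on UNIV (\<lambda>g::'a \<Rightarrow> 'b \<Rightarrow> real. g x)" by simp
  then have "continuous_on UNIV (\<lambda>g::'a \<Rightarrow> 'b \<Rightarrow> real. g x k)"
    by (rule continuous_on_product_then_coordinatewise)
  then show ?thesis by (rule continuous_on_subset) simp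
qed

lemma continuous_on_pi_g: "continuous_on S (\<lambda>g. pi_g P Pih p g x)"
proof (cases "x \<in> X0 P p")
  case True
  then show ?thesis unfolding pi_g_def
    by (simp add: continuous_on_sum continuous_on_mult continuous_on_eval2)
qed (simp add: pi_g_def)

context gated_experts
begin

lemma kl_gate_convex:
  assumes t: "0 \<le> t" "t \<le> 1"
    and pos: "\<And>x. pmf (P k) x \<noteq> 0 \<Longrightarrow> 0 < pi_g P Pih p a x \<and> 0 < pi_g P Pih p b x"
  shows "kl_gate k (mix_gate t a b) \<le> (1 - t) * kl_gate k a + t * kl_gate k b"
proof -
  let ?d = "\<lambda>g x. pmf (P k) x * (ln (pmf (P k) x) - ln (pi_g P Pih p g x))"
  have "?d (mix_gate t a b) x \<le> (1 - t) * ?d a x + t * ?d b x" for x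
  proof (cases "pmf (P k) x = 0")
    case False
    have "(1 - t) * ln (pi_g P Pih p a x) + t * ln (pi_g P Pih p b x) \<le> ln (pi_g P Pih p (mix_gate t a b) x)"
      unfolding pi_g_mix_gate
      using concave_onD[OF ln_concave t, of "pi_g P Pih p a x" "pi_g P Pih p b x"] pos[OF False] by simp
    then have "pmf (P k) x * ((1 - t) * ln (pi_g P Pih p a x) + t * ln (pi_g P Pih p b x))
        \<le> pmf (P k) x * ln (pi_g P Pih p (mix_gate t a b) x)"
      by (intro mult_left_mono) auto
    then show ?thesis by (simp add: algebra_simps)
  qed simp
  then have "kl_gate k (mix_gate t a b) \<le> (\<Sum>x\<in>X. (1 - t) * ?d a x + t * ?d b x)"
    unfolding kl_gate_def KL_sum_def by (intro sum_mono)
  also have "\<dots> = (1 - t) * kl_gate k a + t * kl_gate k b"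
    by (simp add: kl_gate_def KL_sum_def sum.distrib sum_distrib_left)
  finally show ?thesis .
qed

text \<open>Gates in \<open>gate_box\<close> vanish outside \<open>X \<times> [1,p]\<close>, which makes the box compact in the
  product topology; the floor \<open>\<delta> > 0\<close> keeps the logarithms in \<open>kl_gate\<close> continuous.\<close>
definition gate_box :: "('a \<Rightarrow> nat \<Rightarrow> real) set" where
  "gate_box = {g. \<forall>x k. g x k \<in> (if x \<in> X \<and> k \<in> {1..p} then {0..1} else {0})}"

definition G1_above :: "real \<Rightarrow> ('a \<Rightarrow> nat \<Rightarrow> real) set" where
  "G1_above \<delta> = {g \<in> gate_box. (\<forall>x\<in>X. (\<Sum>k=1..p. g x k) = 1) \<and> Z_g P Pih p g = 1 \<and>
      (\<forall>x\<in>X. \<delta> \<le> pi_g P Pih p g x)}"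

lemma gate_box_iff:
  "g \<in> gate_box \<longleftrightarrow> (\<forall>x\<in>X. \<forall>k\<in>{1..p}. 0 \<le> g x k \<and> g x k \<le> 1) \<and>
     (\<forall>x k. \<not> (x \<in> X \<and> k \<in> {1..p}) \<longrightarrow> g x k = 0)"
  unfolding gate_box_def by (auto split: if_splits)

lemma compact_gate_box: "compact gate_box"
proof -
  have "gate_box = {g. \<forall>x. g x \<in> {h. \<forall>k. h k \<in> (if x \<in> X \<and> k \<in> {1..p} then {0..1} else {0})}}"
    by (simp add: gate_box_def)
  also have "compact \<dots>"
    by (intro compact_fun_box) auto
  finally show ?thesis .
qed

lemma compact_G1_above: "compact (G1_above \<delta>)"
proof -
  have "G1_above \<delta> = gate_box \<inter> ((\<Inter>x\<in>X. {g. (\<Sum>k=1..p. g x k) = 1}) \<inter>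
      {g. (\<Sum>x\<in>X. pi_g P Pih p g x) = 1} \<inter> (\<Inter>x\<in>X. {g. \<delta> \<le> pi_g P Pih p g x}))"
    by (auto simp: G1_above_def Z_g_def)
  also have "compact \<dots>"
    by (intro compact_Int_closed compact_gate_box closed_Int closed_INT ballI closed_Collect_eq
          closed_Collect_le continuous_on_sum continuous_on_eval2 continuous_on_pi_g continuous_on_const)
  finally show ?thesis .
qed

lemma G1_above_subset_G1: "G1_above \<delta> \<subseteq> G1 P Pih p"
  by (auto simp: G1_above_def G1_def is_gate_def gate_box_iff)

lemma continuous_on_kl_gate:
  assumes "0 < \<delta>"
  shows "continuous_on (G1_above \<delta>) (kl_gate k)"
proof -
  have "pi_g P Pih p g x \<noteq> 0" if "g \<in> G1_above \<delta>" "x \<in> X" for g x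
    using that assms unfolding G1_above_def by force
  then show ?thesis
    unfolding kl_gate_def KL_sum_def
    by (intro continuous_on_sum continuous_on_mult continuous_on_diff continuous_on_const
          continuous_on_ln continuous_on_pi_g) auto
qed

lemma mix_gate_G1_above:
  assumes a: "a \<in> G1_above \<delta>" and b: "b \<in> G1_above \<delta>" and t: "0 \<le> t" "t \<le> 1"
  shows "mix_gate t a b \<in> G1_above \<delta>"
proof -
  have "mix_gate t a b \<in> gate_box"
    using a b t convex_bound_le[of "a x k" 1 "b x k" "1 - t" t for x k]
    by (auto simp: G1_above_def gate_box_iff mix_gate_def)
  moreover have "(\<Sum>k=1..p. mix_gate t a b x k) = 1" if "x \<in> X" for x
    using a b that by (simp add: G1_above_def mix_gate_def sum.distrib sum_distrib_left[symmetric])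
  moreover have "Z_g P Pih p (mix_gate t a b) = 1"
    using a b by (simp add: G1_above_def Z_g_def pi_g_mix_gate sum.distrib sum_distrib_left[symmetric])
  moreover have "\<delta> \<le> pi_g P Pih p (mix_gate t a b) x" if "x \<in> X" for x
  proof -
    have "\<delta> \<le> pi_g P Pih p a x" "\<delta> \<le> pi_g P Pih p b x"
      using a b that by (auto simp: G1_above_def)
    then have "(1 - t) * \<delta> + t * \<delta> \<le> (1 - t) * pi_g P Pih p a x + t * pi_g P Pih p b x"
      using t by (intro add_mono mult_left_mono) auto
    then show ?thesis by (simp add: pi_g_mix_gate algebra_simps)
  qed
  ultimately show ?thesis by (simp add: G1_above_def)
qed

lemma pi_g_pos_if_G1_above: "0 < \<delta> \<Longrightarrow> g \<in> G1_above \<delta> \<Longrightarrow> x \<in> X \<Longrightarrow> 0 < pi_g P Pih p g x"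
  unfolding G1_above_def by force

lemma pi_g_le_1:
  assumes "g \<in> G1 P Pih p"
  shows "pi_g P Pih p g x \<le> 1"
proof (cases "x \<in> X")
  case True
  have "is_gate X p g" "Z_g P Pih p g = 1" using assms by (auto simp: G1_def)
  then have "pi_g P Pih p g x \<le> (\<Sum>y\<in>X. pi_g P Pih p g y)"
    using True finite_X pi_g_nonneg by (intro member_le_sum) auto
  then show ?thesis using \<open>Z_g P Pih p g = 1\<close> by (simp add: Z_g_def)
qed (simp add: pi_g_def)

lemma pmf_neg_ln_pi_g_le:
  assumes g: "g \<in> G1 P Pih p" and pos: "\<forall>y\<in>X. 0 < pi_g P Pih p g y" and x: "x \<in> X"
  shows "pmf (P k) x * - ln (pi_g P Pih p g x) \<le> kl_gate k g - (\<Sum>y\<in>X. pmf (P k) y * ln (pmf (P k) y))"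
proof -
  have "0 \<le> pmf (P k) y * - ln (pi_g P Pih p g y)" if "y \<in> X" for y
    using pos pi_g_le_1[OF g, of y] that by (intro mult_nonneg_nonneg) auto
  then have "pmf (P k) x * - ln (pi_g P Pih p g x) \<le> (\<Sum>y\<in>X. pmf (P k) y * - ln (pi_g P Pih p g y))"
    using finite_X x by (intro member_le_sum) auto
  also have "\<dots> = kl_gate k g - (\<Sum>y\<in>X. pmf (P k) y * ln (pmf (P k) y))"
    by (simp add: kl_gate_def KL_sum_def right_diff_distrib sum_subtractf sum_negf)
  finally show ?thesis .
qed

text \<open>Since \<open>\<pi>_g \<le> 1\<close>, each term of \<open>KL(P_k || \<pi>_g)\<close> beyond the entropy of \<open>P_k\<close> is
  nonnegative, so a bound on the divergence bounds \<open>\<pi>_g\<close> from below on the support of \<open>P_k\<close>.\<close>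
lemma pi_g_floor:
  assumes "0 \<le> M"
  obtains \<delta> where "0 < \<delta>"
    "\<And>g x. g \<in> G1 P Pih p \<Longrightarrow> \<forall>y\<in>X. 0 < pi_g P Pih p g y \<Longrightarrow> \<forall>k\<in>{1..p}. kl_gate k g \<le> M \<Longrightarrow>
       x \<in> X \<Longrightarrow> \<delta> \<le> pi_g P Pih p g x"
proof -
  define H where "H = (\<Sum>k=1..p. \<bar>\<Sum>y\<in>X. pmf (P k) y * ln (pmf (P k) y)\<bar>)"
  define m where "m = Min (\<Union>k\<in>{1..p}. pmf (P k) ` set_pmf (P k))"
  have H: "- (\<Sum>y\<in>X. pmf (P k) y * ln (pmf (P k) y)) \<le> H" if "k \<in> {1..p}" for k
    using that member_le_sum[of k "{1..p}" "\<lambda>k. \<bar>\<Sum>y\<in>X. pmf (P k) y * ln (pmf (P k) y)\<bar>"]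
    by (simp add: H_def)
  have "0 \<le> H" unfolding H_def by (intro sum_nonneg) auto
  have fin: "finite (\<Union>k\<in>{1..p}. pmf (P k) ` set_pmf (P k))"
    using finite_support by auto
  have "pmf (P 1) ` set_pmf (P 1) \<noteq> {}" by (simp add: set_pmf_not_empty)
  then have m_pos: "0 < m"
    unfolding m_def using fin p_pos by (subst Min_gr_iff) (auto simp: pmf_positive)
  have m_le: "m \<le> pmf (P k) x" if "k \<in> {1..p}" "0 < pmf (P k) x" for k x
  proof -
    have "pmf (P k) x \<in> (\<Union>k\<in>{1..p}. pmf (P k) ` set_pmf (P k))"
      using that by (intro UN_I[of k]) (auto simp: set_pmf_iff)
    then show ?thesis unfolding m_def using fin by (rule Min_le[rotated])
  qed
  show ?thesis
  proof (rule that[of "exp (- ((M + H) / m))"])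
    fix g x assume g: "g \<in> G1 P Pih p" and pos: "\<forall>y\<in>X. 0 < pi_g P Pih p g y"
      and M: "\<forall>k\<in>{1..p}. kl_gate k g \<le> M" and x: "x \<in> X"
    obtain k where k: "k \<in> {1..p}" "0 < pmf (P k) x" using X_covered[OF x] by blast
    have "pmf (P k) x * - ln (pi_g P Pih p g x) \<le> M + H"
      using pmf_neg_ln_pi_g_le[OF g pos x, of k] M H[OF k(1)] k(1) by fastforce
    then have "- ln (pi_g P Pih p g x) \<le> (M + H) / pmf (P k) x"
      using k(2) by (simp add: pos_le_divide_eq mult.commute)
    also have "\<dots> \<le> (M + H) / m"
      using m_le[OF k] m_pos \<open>0 \<le> H\<close> assms by (intro divide_left_mono) auto
    finally have "exp (- ((M + H) / m)) \<le> exp (ln (pi_g P Pih p g x))" by simp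
    then show "exp (- ((M + H) / m)) \<le> pi_g P Pih p g x" using pos x by simp
  qed simp
qed

definition trim_gate :: "('a \<Rightarrow> nat \<Rightarrow> real) \<Rightarrow> 'a \<Rightarrow> nat \<Rightarrow> real" where
  "trim_gate g x k = (if x \<in> X \<and> k \<in> {1..p} then g x k else 0)"

lemma pi_g_trim_gate: "pi_g P Pih p (trim_gate g) = pi_g P Pih p g"
  by (simp add: fun_eq_iff pi_g_def trim_gate_def)

lemma midpoint_G1_above:
  assumes a: "a \<in> G1_above \<delta>" and floor: "\<forall>x\<in>X. 2 * \<delta> \<le> pi_g P Pih p a x" and g: "g \<in> G1 P Pih p"
  shows "mix_gate (1/2) a (trim_gate g) \<in> G1_above \<delta>"
proof -
  have g_gate: "is_gate X p g" and Z: "Z_g P Pih p g = 1" using g by (auto simp: G1_def)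
  have a_box: "a \<in> gate_box" using a by (simp add: G1_above_def)
  have "mix_gate (1/2) a (trim_gate g) \<in> gate_box"
    unfolding gate_box_iff
  proof (intro conjI ballI allI impI)
    fix x k assume xk: "x \<in> X" "k \<in> {1..p}"
    then have "0 \<le> a x k \<and> a x k \<le> 1" "0 \<le> g x k \<and> g x k \<le> 1"
      using a_box g_gate by (simp_all add: gate_box_iff is_gate_def)
    then show "0 \<le> mix_gate (1/2) a (trim_gate g) x k" "mix_gate (1/2) a (trim_gate g) x k \<le> 1"
      using xk by (simp_all add: mix_gate_def trim_gate_def)
  next
    fix x k assume "\<not> (x \<in> X \<and> k \<in> {1..p})"
    moreover have "a x k = 0" using a_box calculation by (simp add: gate_box_iff)
    ultimately show "mix_gate (1/2) a (trim_gate g) x k = 0"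
      by (auto simp: mix_gate_def trim_gate_def)
  qed
  moreover have "(\<Sum>k=1..p. mix_gate (1/2) a (trim_gate g) x k) = 1" if "x \<in> X" for x
  proof -
    have "(\<Sum>k=1..p. a x k) = 1" "(\<Sum>k=1..p. g x k) = 1"
      using a g_gate that by (auto simp: G1_above_def is_gate_def)
    moreover have "(\<Sum>k=1..p. mix_gate (1/2) a (trim_gate g) x k) = (\<Sum>k=1..p. (a x k + g x k) / 2)"
      using that by (intro sum.cong) (auto simp: mix_gate_def trim_gate_def)
    ultimately show ?thesis by (simp add: sum_divide_distrib[symmetric] sum.distrib)
  qed
  moreover have "Z_g P Pih p (mix_gate (1/2) a (trim_gate g)) = 1"
    using a Z by (simp add: G1_above_def Z_g_def pi_g_mix_gate pi_g_trim_gate sum.distrib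
        sum_divide_distrib[symmetric])
  moreover have "\<delta> \<le> pi_g P Pih p (mix_gate (1/2) a (trim_gate g)) x" if "x \<in> X" for x
    using floor[rule_format, OF that] pi_g_nonneg[OF g_gate, of x] by (simp add: pi_g_mix_gate pi_g_trim_gate)
  ultimately show ?thesis by (simp add: G1_above_def)
qed

text \<open>The restricted minimax inequality extends to every gate \<open>g\<close>: the midpoint of \<open>gs\<close> and \<open>g\<close>
  still lies in the restricted set, because \<open>gs\<close> stays away from the floor, and convexity does
  the rest.\<close>
lemma restricted_minimax_extends:
  assumes ls: "ls \<in> prob_simplex p" and gs: "gs \<in> G1_above \<delta>" "\<forall>x\<in>X. 2 * \<delta> \<le> pi_g P Pih p gs x"
    and \<delta>: "0 < \<delta>"
    and minimax: "\<And>k g. k \<in> {1..p} \<Longrightarrow> g \<in> G1_above \<delta> \<Longrightarrow> kl_gate k gs \<le> (\<Sum>j=1..p. ls j * kl_gate j g)"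
    and g: "g \<in> G1 P Pih p"
    and pos: "\<And>k x. k \<in> {1..p} \<Longrightarrow> 0 < ls k \<Longrightarrow> pmf (P k) x \<noteq> 0 \<Longrightarrow> 0 < pi_g P Pih p g x"
  shows "(\<Sum>k=1..p. ls k * kl_gate k gs) \<le> (\<Sum>k=1..p. ls k * kl_gate k g)"
proof -
  define h where "h = mix_gate (1/2) gs (trim_gate g)"
  have l0: "\<And>k. k \<in> {1..p} \<Longrightarrow> 0 \<le> ls k" and l1: "(\<Sum>k=1..p. ls k) = 1"
    using ls by (auto simp: prob_simplex_def)
  have h: "h \<in> G1_above \<delta>" unfolding h_def using midpoint_G1_above[OF gs g] .
  have convex: "ls k * kl_gate k h \<le> ls k * ((kl_gate k gs + kl_gate k g) / 2)" if k: "k \<in> {1..p}" for k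
  proof (cases "ls k = 0")
    case False
    with l0[OF k] have "0 < ls k" by simp
    moreover have "0 < pi_g P Pih p gs x" if "pmf (P k) x \<noteq> 0" for x
      using pi_g_pos_if_G1_above[OF \<delta> gs(1) pmf_nonzero_in_X[OF k that]] .
    ultimately have "kl_gate k h \<le> (1 - 1/2) * kl_gate k gs + 1/2 * kl_gate k (trim_gate g)"
      unfolding h_def using pos[OF k] by (intro kl_gate_convex) (auto simp: pi_g_trim_gate)
    then show ?thesis using l0[OF k] by (intro mult_left_mono) (auto simp: kl_gate_def pi_g_trim_gate)
  qed simp
  have "(\<Sum>k=1..p. ls k * kl_gate k gs) \<le> (\<Sum>k=1..p. ls k * (\<Sum>j=1..p. ls j * kl_gate j h))"
    using l0 minimax h by (intro sum_mono mult_left_mono) auto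
  also have "\<dots> = (\<Sum>j=1..p. ls j * kl_gate j h)"
    using l1 by (simp add: sum_distrib_right[symmetric])
  also have "\<dots> \<le> (\<Sum>k=1..p. ls k * ((kl_gate k gs + kl_gate k g) / 2))"
    using convex by (rule sum_mono)
  also have "\<dots> = ((\<Sum>k=1..p. ls k * kl_gate k gs) + (\<Sum>k=1..p. ls k * kl_gate k g)) / 2"
    by (simp add: sum.distrib sum_divide_distrib[symmetric] distrib_left)
  finally show ?thesis by simp
qed

lemma is_saddle_if_restricted_minimax:
  assumes ls: "ls \<in> prob_simplex p" and gs: "gs \<in> G1_above \<delta>" "\<forall>x\<in>X. 2 * \<delta> \<le> pi_g P Pih p gs x"
    and \<delta>: "0 < \<delta>"
    and minimax: "\<And>k g. k \<in> {1..p} \<Longrightarrow> g \<in> G1_above \<delta> \<Longrightarrow> kl_gate k gs \<le> (\<Sum>j=1..p. ls j * kl_gate j g)"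
  shows "is_saddle P Pih p ls gs"
proof -
  have gs_G1: "gs \<in> G1 P Pih p" using gs(1) G1_above_subset_G1 by blast
  have "0 < pi_g P Pih p gs x" if "k \<in> {1..p}" "pmf (P k) x \<noteq> 0" for k x
    using pi_g_pos_if_G1_above[OF \<delta> gs(1) pmf_nonzero_in_X[OF that]] .
  then have L_gs: "Ltilde P Pih p l gs = ereal (\<Sum>k=1..p. l k * kl_gate k gs)" if "l \<in> prob_simplex p" for l
    unfolding Ltilde_def using that by (intro sum_ereal_weighted KL_pi_g_eq_kl_gate) (auto simp: prob_simplex_def)
  have "Ltilde P Pih p l gs \<le> Ltilde P Pih p ls gs" if l: "l \<in> prob_simplex p" for l
  proof -
    have "(\<Sum>k=1..p. l k * kl_gate k gs) \<le> (\<Sum>k=1..p. l k * (\<Sum>j=1..p. ls j * kl_gate j gs))"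
      using l minimax gs(1) by (intro sum_mono mult_left_mono) (auto simp: prob_simplex_def)
    also have "\<dots> = (\<Sum>j=1..p. ls j * kl_gate j gs)"
      using l by (simp add: prob_simplex_def sum_distrib_right[symmetric])
    finally show ?thesis using L_gs[OF l] L_gs[OF ls] by simp
  qed
  moreover have "Ltilde P Pih p ls gs \<le> Ltilde P Pih p ls g" if g: "g \<in> G1 P Pih p" for g
  proof (rule Ltilde_cases[OF ls, of g])
    show "is_gate X p g" using g by (simp add: G1_def)
  next
    assume pos: "\<And>k x. k \<in> {1..p} \<Longrightarrow> 0 < ls k \<Longrightarrow> pmf (P k) x \<noteq> 0 \<Longrightarrow> 0 < pi_g P Pih p g x"
      and "Ltilde P Pih p ls g = ereal (\<Sum>k=1..p. ls k * kl_gate k g)"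
    then show ?thesis
      using L_gs[OF ls] restricted_minimax_extends[OF ls gs \<delta> minimax g pos] by simp
  qed simp
  ultimately show ?thesis
    using ls gs_G1 by (simp add: is_saddle_def)
qed

lemma sigma_gate_G1_above:
  assumes "\<forall>x\<in>X. \<delta> \<le> pi_g P Pih p sigma_gate x"
  shows "sigma_gate \<in> G1_above \<delta>"
proof -
  have "sigma_gate \<in> gate_box"
    using sigma_le_1 less_imp_le[OF sigma_pos] by (auto simp: gate_box_iff sigma_gate_def)
  moreover have "(\<Sum>k=1..p. sigma_gate x k) = 1" if "x \<in> X" for x
    using that sum_sigma by (simp add: sigma_gate_def)
  ultimately show ?thesis
    using sigma_gate_G1 assms by (simp add: G1_above_def G1_def)
qed

lemma pi_g_sigma_gate_pos:
  assumes "x \<in> X"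
  shows "0 < pi_g P Pih p sigma_gate x"
proof -
  obtain k where k: "k \<in> {1..p}" "pmf (P k) x \<noteq> 0" using X_covered[OF assms] by force
  show ?thesis
    using sigma_mass_le_pi_sigma[OF k] assms by (simp add: pi_g_sigma_gate)
qed

theorem exists_saddle: "\<exists>ls gs. is_saddle P Pih p ls gs"
proof -
  define M where "M = (\<Sum>k=1..p. \<bar>kl_gate k sigma_gate\<bar>)"
  have "0 \<le> M" unfolding M_def by (intro sum_nonneg) auto
  have M: "kl_gate k sigma_gate \<le> M" if "k \<in> {1..p}" for k
    using that member_le_sum[of k "{1..p}" "\<lambda>k. \<bar>kl_gate k sigma_gate\<bar>"] by (simp add: M_def)
  obtain \<delta> where \<delta>: "0 < \<delta>" and floor: "\<And>g x. g \<in> G1 P Pih p \<Longrightarrow> \<forall>y\<in>X. 0 < pi_g P Pih p g y \<Longrightarrow>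
      \<forall>k\<in>{1..p}. kl_gate k g \<le> M \<Longrightarrow> x \<in> X \<Longrightarrow> \<delta> \<le> pi_g P Pih p g x"
    by (rule pi_g_floor[OF \<open>0 \<le> M\<close>], rule that)
  have "sigma_gate \<in> G1_above (\<delta> / 2)"
    using floor[OF sigma_gate_G1] pi_g_sigma_gate_pos M \<delta> by (intro sigma_gate_G1_above) force
  then interpret convex_family "G1_above (\<delta> / 2)" mix_gate "{1..p}" kl_gate
    using \<delta> by unfold_locales
      (auto simp: compact_G1_above continuous_on_kl_gate mix_gate_G1_above intro!: kl_gate_convex
        pi_g_pos_if_G1_above[of "\<delta> / 2"] pmf_nonzero_in_X)
  obtain ls gs where ls: "\<forall>k\<in>{1..p}. 0 \<le> ls k" "(\<Sum>k=1..p. ls k) = 1" and gs: "gs \<in> G1_above (\<delta> / 2)"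
    and gs_minimax: "\<And>k g. k \<in> {1..p} \<Longrightarrow> g \<in> G1_above (\<delta> / 2) \<Longrightarrow> kl_gate k gs \<le> (\<Sum>j=1..p. ls j * kl_gate j g)"
  proof (rule minimax)
    show "G1_above (\<delta> / 2) \<noteq> {}" using \<open>sigma_gate \<in> G1_above (\<delta> / 2)\<close> by blast
    show "{1..p} \<noteq> {}" using p_pos by simp
  qed (rule that)
  have "kl_gate k gs \<le> M" if "k \<in> {1..p}" for k
  proof -
    have "kl_gate k gs \<le> (\<Sum>j=1..p. ls j * kl_gate j sigma_gate)"
      using gs_minimax[OF that \<open>sigma_gate \<in> G1_above (\<delta> / 2)\<close>] .
    also have "\<dots> \<le> (\<Sum>j=1..p. ls j * M)"
      using ls M by (intro sum_mono mult_left_mono) auto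
    finally show ?thesis using ls(2) by (simp add: sum_distrib_right[symmetric])
  qed
  then have "\<forall>x\<in>X. 2 * (\<delta> / 2) \<le> pi_g P Pih p gs x"
    using floor[of gs] gs G1_above_subset_G1 pi_g_pos_if_G1_above[of "\<delta> / 2" gs] \<delta> by auto
  moreover have "ls \<in> prob_simplex p" using ls by (simp add: prob_simplex_def)
  moreover have "0 < \<delta> / 2" using \<delta> by simp
  ultimately have "is_saddle P Pih p ls gs"
    using gs gs_minimax by (intro is_saddle_if_restricted_minimax[where \<delta> = "\<delta> / 2"])
  then show ?thesis by blast
qed

end

theorem mainTheorem5:
  fixes p :: nat and P Pih :: "nat \<Rightarrow> 'a pmf" and eps :: "nat \<Rightarrow> real"
  assumes "1 \<le> p"
    and "\<forall>k\<in>{1..p}. finite (set_pmf (P k))"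
    and "\<forall>k\<in>{1..p}. set_pmf (Pih k) \<subseteq> X0 P p"
    and "\<forall>k\<in>{1..p}. KL (pmf (P k)) (pmf (Pih k)) \<le> ereal (eps k)"
  shows "(\<exists>ls gs. is_saddle P Pih p ls gs) \<and>
         (\<forall>ls gs. is_saddle P Pih p ls gs \<longrightarrow>
            (\<forall>l\<in>prob_simplex p. KL (mixture P p l) (pi_g P Pih p gs)
               \<le> ereal (ln (\<Sum>k=1..p. exp (eps k)) - H_cond P Pih eps p ls) - JSD P p l))"
proof -
  interpret gated_experts p P Pih eps
    using assms by unfold_locales
  show ?thesis
    using exists_saddle KL_mixture_le by blast
qed

end
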